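(* Let $(\mathcal C,\otimes,I,\top)$ be a pseudo-purifiable discard category. Then the relation $\preceq$ on each hom-set $\mathcal C(A,B)$ is reflexive and transitive, and it is preserved by composition and monoidal product: if $f\preceq f'$ in $\mathcal C(A,B)$ and $g\preceq g'$ in $\mathcal C(B,C)$ then $g\circ f\preceq g'\circ f'$, and if $f\preceq f'$ in $\mathcal C(A,B)$, $g\preceq g'$ in $\mathcal C(A',B')$ then $f\otimes g\preceq f'\otimes g'$. Hence $\preceq$ is a preorder enrichment of $\mathcal C$.
   Context: Monoidal categories are treated as strict; $\sigma$ is the symmetry. A discard category is a symmetric monoidal category $(\mathcal C,\otimes,I)$ with, for every object $A$, a morphism $\top_A:A\to I$ such that $\top_I=\mathrm{id}_I$ and $\top_{A\otimes B}=\top_A\otimes\top_B$. A morphism $f:A\to B$ is causal if $\top_B\circ f=\top_A$. For $f,g\in\mathcal C(A,B)$, $f\preceq g$ iff there are an object $X$, $g_0\in\mathcal C(A,B\otimes X)$ and $f_0\in\mathcal C(X,I)$ with $f=(\mathrm{id}_B\otimes f_0)\circ g_0$ and $g=(\mathrm{id}_B\otimes\top_X)\circ g_0$. A morphism $p\in\mathcal C(A,B\otimes X)$ is a pseudo-purification of $f\in\mathcal C(A,B)$, written $p\in\mathrm{Pure}(f)$, if for every object $Y$ and every $g\in\mathcal C(A,B\otimes Y)$ with $f=(\mathrm{id}_B\otimes\top_Y)\circ g$ there exists a causal $c\in\mathcal C(X,Y)$ with $g=(\mathrm{id}_B\otimes c)\circ p$. The category is pseudo-purifiable if every morphism has a pseudo-purification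 and, for all $f_1\in\mathcal C(A_1,B_1\otimes C)$, $f_2\in\mathcal C(C\otimes A_2,B_2)$, $p_1\in\mathrm{Pure}(f_1)$ with $p_1:A_1\to B_1\otimes C\otimes X_1$ and $p_2\in\mathrm{Pure}(f_2)$ with $p_2:C\otimes A_2\to B_2\otimes X_2$, the morphism $q:=(\mathrm{id}_{B_1\otimes B_2}\otimes\sigma_{X_2,X_1})\circ(\mathrm{id}_{B_1}\otimes p_2\otimes\mathrm{id}_{X_1})\circ(\mathrm{id}_{B_1\otimes C}\otimes\sigma_{X_1,A_2})\circ(p_1\otimes\mathrm{id}_{A_2}):A_1\otimes A_2\to B_1\otimes B_2\otimes X_1\otimes X_2$ is a pseudo-purification of $(\mathrm{id}_{B_1}\otimes f_2)\circ(f_1\otimes\mathrm{id}_{A_2})$. *)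

theory Defs
  imports Main
begin

text \<open>Objects are all elements of type 'o; morphisms are the elements of the set arr
  of type 'm, each with a domain and codomain. Composition cmp g f means g after f.\<close>

record ('o, 'm) smcat =
  arr :: "'m set"
  dom_of :: "'m \<Rightarrow> 'o"
  cod_of :: "'m \<Rightarrow> 'o"
  cmp :: "'m \<Rightarrow> 'm \<Rightarrow> 'm"
  idm :: "'o \<Rightarrow> 'm"
  otens :: "'o \<Rightarrow> 'o \<Rightarrow> 'o"
  mtens :: "'m \<Rightarrow> 'm \<Rightarrow> 'm"
  unit_obj :: "'o"
  symm :: "'o \<Rightarrow> 'o \<Rightarrow> 'm"
  disc :: "'o \<Rightarrow> 'm"

definition hom :: "('o, 'm) smcat \<Rightarrow> 'o \<Rightarrow> 'o \<Rightarrow> 'm set" where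
  "hom C A B = {f \<in> arr C. dom_of C f = A \<and> cod_of C f = B}"

locale discard_category =
  fixes C :: "('o, 'm) smcat"
  assumes comp_hom: "\<And>A B D f g. f \<in> hom C A B \<Longrightarrow> g \<in> hom C B D \<Longrightarrow> cmp C g f \<in> hom C A D"
    and id_hom: "\<And>A. idm C A \<in> hom C A A"
    and id_left: "\<And>A B f. f \<in> hom C A B \<Longrightarrow> cmp C (idm C B) f = f"
    and id_right: "\<And>A B f. f \<in> hom C A B \<Longrightarrow> cmp C f (idm C A) = f"
    and comp_assoc: "\<And>A B D E f g h. f \<in> hom C A B \<Longrightarrow> g \<in> hom C B D \<Longrightarrow> h \<in> hom C D E
        \<Longrightarrow> cmp C h (cmp C g f) = cmp C (cmp C h g) f"
    and otens_assoc: "\<And>A B D. otens C (otens C A B) D = otens C A (otens C B D)"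
    and otens_unit_left: "\<And>A. otens C (unit_obj C) A = A"
    and otens_unit_right: "\<And>A. otens C A (unit_obj C) = A"
    and tens_hom: "\<And>A B A' B' f g. f \<in> hom C A B \<Longrightarrow> g \<in> hom C A' B'
        \<Longrightarrow> mtens C f g \<in> hom C (otens C A A') (otens C B B')"
    and tens_id: "\<And>A B. mtens C (idm C A) (idm C B) = idm C (otens C A B)"
    and tens_interchange: "\<And>A B D A' B' D' f g f' g'. f \<in> hom C A B \<Longrightarrow> g \<in> hom C B D
        \<Longrightarrow> f' \<in> hom C A' B' \<Longrightarrow> g' \<in> hom C B' D'
        \<Longrightarrow> mtens C (cmp C g f) (cmp C g' f') = cmp C (mtens C g g') (mtens C f f')"
    and tens_assoc: "\<And>f g h. f \<in> arr C \<Longrightarrow> g \<in> arr C \<Longrightarrow> h \<in> arr C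
        \<Longrightarrow> mtens C (mtens C f g) h = mtens C f (mtens C g h)"
    and tens_unit_left: "\<And>f. f \<in> arr C \<Longrightarrow> mtens C (idm C (unit_obj C)) f = f"
    and tens_unit_right: "\<And>f. f \<in> arr C \<Longrightarrow> mtens C f (idm C (unit_obj C)) = f"
    and symm_hom: "\<And>A B. symm C A B \<in> hom C (otens C A B) (otens C B A)"
    and symm_natural: "\<And>A B A' B' f g. f \<in> hom C A B \<Longrightarrow> g \<in> hom C A' B'
        \<Longrightarrow> cmp C (symm C B B') (mtens C f g) = cmp C (mtens C g f) (symm C A A')"
    and symm_inv: "\<And>A B. cmp C (symm C B A) (symm C A B) = idm C (otens C A B)"
    and symm_hexagon: "\<And>A B D. symm C A (otens C B D)
        = cmp C (mtens C (idm C B) (symm C A D)) (mtens C (symm C A B) (idm C D))"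
    and disc_hom: "\<And>A. disc C A \<in> hom C A (unit_obj C)"
    and disc_unit: "disc C (unit_obj C) = idm C (unit_obj C)"
    and disc_tens: "\<And>A B. disc C (otens C A B) = mtens C (disc C A) (disc C B)"

definition causal :: "('o, 'm) smcat \<Rightarrow> 'o \<Rightarrow> 'o \<Rightarrow> 'm \<Rightarrow> bool" where
  "causal C A B f \<longleftrightarrow> f \<in> hom C A B \<and> cmp C (disc C B) f = disc C A"

definition preceq :: "('o, 'm) smcat \<Rightarrow> 'o \<Rightarrow> 'o \<Rightarrow> 'm \<Rightarrow> 'm \<Rightarrow> bool" where
  "preceq C A B f g \<longleftrightarrow> f \<in> hom C A B \<and> g \<in> hom C A B \<and>
     (\<exists>X g0 f0. g0 \<in> hom C A (otens C B X) \<and> f0 \<in> hom C X (unit_obj C) \<and>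
        f = cmp C (mtens C (idm C B) f0) g0 \<and>
        g = cmp C (mtens C (idm C B) (disc C X)) g0)"

definition Pure :: "('o, 'm) smcat \<Rightarrow> 'o \<Rightarrow> 'o \<Rightarrow> 'o \<Rightarrow> 'm \<Rightarrow> 'm \<Rightarrow> bool" where
  "Pure C A B X f p \<longleftrightarrow> f \<in> hom C A B \<and> p \<in> hom C A (otens C B X) \<and>
     (\<forall>Y g. g \<in> hom C A (otens C B Y) \<and> f = cmp C (mtens C (idm C B) (disc C Y)) g \<longrightarrow>
        (\<exists>c. causal C X Y c \<and> g = cmp C (mtens C (idm C B) c) p))"

definition pseudo_purifiable :: "('o, 'm) smcat \<Rightarrow> bool" where
  "pseudo_purifiable C \<longleftrightarrow>
     (\<forall>A B f. f \<in> hom C A B \<longrightarrow> (\<exists>X p. Pure C A B X f p)) \<and>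
     (\<forall>A1 B1 D A2 B2 X1 X2 f1 f2 p1 p2.
        f1 \<in> hom C A1 (otens C B1 D) \<longrightarrow> f2 \<in> hom C (otens C D A2) B2 \<longrightarrow>
        Pure C A1 (otens C B1 D) X1 f1 p1 \<longrightarrow> Pure C (otens C D A2) B2 X2 f2 p2 \<longrightarrow>
        Pure C (otens C A1 A2) (otens C B1 B2) (otens C X1 X2)
          (cmp C (mtens C (idm C B1) f2) (mtens C f1 (idm C A2)))
          (cmp C (mtens C (idm C (otens C B1 B2)) (symm C X2 X1))
            (cmp C (mtens C (mtens C (idm C B1) p2) (idm C X1))
              (cmp C (mtens C (idm C (otens C B1 D)) (symm C X1 A2))
                (mtens C p1 (idm C A2))))))"

end

theory Submission
  imports Defs
begin

text \<open>Reflexivity, compatibility with composition and compatibility with the tensor product only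
  rearrange the dilations witnessing \<open>\<preceq>\<close>. Transitivity needs purification: if \<open>p\<close> is a
  pseudo-purification of \<open>h\<close>, then the morphisms below \<open>h\<close> are exactly the \<open>(id \<otimes> e) \<circ> p\<close> with
  \<open>e\<close> an effect. Given \<open>f \<preceq> g \<preceq> h\<close>, write \<open>g = (id \<otimes> e) \<circ> p\<close>, purify \<open>p\<close> to \<open>p\<^sub>1\<close> and
  \<open>e\<close> to \<open>p\<^sub>2\<close>; the second purifiability axiom turns these into a pseudo-purification of \<open>g\<close>
  factoring through \<open>p\<^sub>1\<close>. Hence \<open>f\<close> is an effect applied to \<open>p\<^sub>1\<close>, while \<open>h\<close> is the
  discard applied to \<open>p\<^sub>1\<close>, which is \<open>f \<preceq> h\<close>.\<close>

lemma pseudo_purifiable_Pure_ex: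
  "pseudo_purifiable C \<Longrightarrow> f \<in> hom C A B \<Longrightarrow> \<exists>X p. Pure C A B X f p"
  unfolding pseudo_purifiable_def by blast

lemma pseudo_purifiable_Pure_comp:
  assumes "pseudo_purifiable C"
    and "f1 \<in> hom C A1 (otens C B1 D)" and "f2 \<in> hom C (otens C D A2) B2"
    and "Pure C A1 (otens C B1 D) X1 f1 p1" and "Pure C (otens C D A2) B2 X2 f2 p2"
  shows "Pure C (otens C A1 A2) (otens C B1 B2) (otens C X1 X2)
          (cmp C (mtens C (idm C B1) f2) (mtens C f1 (idm C A2)))
          (cmp C (mtens C (idm C (otens C B1 B2)) (symm C X2 X1))
            (cmp C (mtens C (mtens C (idm C B1) p2) (idm C X1))
              (cmp C (mtens C (idm C (otens C B1 D)) (symm C X1 A2))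
                (mtens C p1 (idm C A2)))))"
  using assms unfolding pseudo_purifiable_def by blast

lemma Pure_hom:
  assumes "Pure C A B X f p"
  shows "f \<in> hom C A B" and "p \<in> hom C A (otens C B X)"
  using assms unfolding Pure_def by blast+

lemma Pure_universal:
  "Pure C A B X f p \<Longrightarrow> g \<in> hom C A (otens C B Y)
    \<Longrightarrow> f = cmp C (mtens C (idm C B) (disc C Y)) g
    \<Longrightarrow> \<exists>c. causal C X Y c \<and> g = cmp C (mtens C (idm C B) c) p"
  unfolding Pure_def by blast

lemma preceq_hom:
  assumes "preceq C A B f g"
  shows "f \<in> hom C A B" and "g \<in> hom C A B"
  using assms unfolding preceq_def by blast+

lemma preceqI:
  "f \<in> hom C A B \<Longrightarrow> g \<in> hom C A B \<Longrightarrow> g0 \<in> hom C A (otens C B X)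
    \<Longrightarrow> f0 \<in> hom C X (unit_obj C) \<Longrightarrow> f = cmp C (mtens C (idm C B) f0) g0
    \<Longrightarrow> g = cmp C (mtens C (idm C B) (disc C X)) g0 \<Longrightarrow> preceq C A B f g"
  unfolding preceq_def by blast

lemma preceqE:
  assumes "preceq C A B f g"
  obtains X g0 f0 where "g0 \<in> hom C A (otens C B X)" and "f0 \<in> hom C X (unit_obj C)"
    and "f = cmp C (mtens C (idm C B) f0) g0" and "g = cmp C (mtens C (idm C B) (disc C X)) g0"
  using assms unfolding preceq_def by blast

context discard_category
begin

declare otens_assoc [simp] otens_unit_left [simp] otens_unit_right [simp]

lemma hom_arr: "f \<in> hom C A B \<Longrightarrow> f \<in> arr C"
  by (simp add: hom_def)

lemma tens_unit_right_hom: "f \<in> hom C A B \<Longrightarrow> mtens C f (idm C (unit_obj C)) = f"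
  using tens_unit_right hom_arr by blast

lemma idm_tens_hom: "a \<in> hom C U V \<Longrightarrow> mtens C (idm C B) a \<in> hom C (otens C B U) (otens C B V)"
  using tens_hom[OF id_hom] by blast

lemma tens_idm_hom: "a \<in> hom C U V \<Longrightarrow> mtens C a (idm C B) \<in> hom C (otens C U B) (otens C V B)"
  using tens_hom[OF _ id_hom] by blast

lemma idm_tens_comp:
  "a \<in> hom C U V \<Longrightarrow> b \<in> hom C V W
    \<Longrightarrow> cmp C (mtens C (idm C B) b) (mtens C (idm C B) a) = mtens C (idm C B) (cmp C b a)"
  using tens_interchange[OF id_hom id_hom, of a U V b W B] id_left[OF id_hom, of B] by simp

lemma idm_tens_comp_assoc:
  "a \<in> hom C U V \<Longrightarrow> b \<in> hom C V W \<Longrightarrow> x \<in> hom C S (otens C B U)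
    \<Longrightarrow> cmp C (mtens C (idm C B) b) (cmp C (mtens C (idm C B) a) x)
      = cmp C (mtens C (idm C B) (cmp C b a)) x"
  using comp_assoc[OF _ idm_tens_hom idm_tens_hom, of x S B U a V b W] idm_tens_comp by simp

lemma idm_otens_tens:
  "a \<in> hom C U V \<Longrightarrow> mtens C (idm C (otens C B D)) a = mtens C (idm C B) (mtens C (idm C D) a)"
  using tens_assoc[OF hom_arr[OF id_hom] hom_arr[OF id_hom] hom_arr] by (simp add: tens_id)

lemma tens_eq_comp_idm_tens:
  assumes "f \<in> hom C A B" and "g \<in> hom C A' B'"
  shows "mtens C f g = cmp C (mtens C (idm C B) g) (mtens C f (idm C A'))"
  using tens_interchange[OF assms(1) id_hom id_hom assms(2)] id_left[OF assms(1)]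
    id_right[OF assms(2)] by simp

lemma tens_eq_comp_tens_idm:
  assumes "f \<in> hom C A B" and "g \<in> hom C A' B'"
  shows "mtens C f g = cmp C (mtens C f (idm C B')) (mtens C (idm C A) g)"
  using tens_interchange[OF id_hom assms(1) assms(2) id_hom] id_right[OF assms(1)]
    id_left[OF assms(2)] by simp

text \<open>The hexagon with two unit objects makes \<open>\<sigma>\<^sub>A\<^sub>,\<^sub>I\<close> an invertible idempotent.\<close>

lemma symm_unit_right: "symm C A (unit_obj C) = idm C A"
proof -
  let ?s = "symm C A (unit_obj C)" and ?t = "symm C (unit_obj C) A"
  have s: "?s \<in> hom C A A" and t: "?t \<in> hom C A A"
    using symm_hom[of A "unit_obj C"] symm_hom[of "unit_obj C" A] by simp_all
  have idem: "cmp C ?s ?s = ?s"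
    using symm_hexagon[of A "unit_obj C" "unit_obj C"] s
    by (simp add: tens_unit_right_hom tens_unit_left hom_arr)
  have inv: "cmp C ?t ?s = idm C A"
    using symm_inv[of "unit_obj C" A] by simp
  have "?s = cmp C (cmp C ?t ?s) ?s"
    using id_left[OF s] inv by simp
  also have "\<dots> = cmp C ?t ?s"
    using comp_assoc[OF s s t] idem by simp
  finally show ?thesis
    using inv by simp
qed

lemma symm_unit_left: "symm C (unit_obj C) A = idm C A"
proof -
  have "symm C (unit_obj C) A \<in> hom C A A"
    using symm_hom[of "unit_obj C" A] by simp
  then show ?thesis
    using symm_inv[of "unit_obj C" A] symm_unit_right id_right by simp
qed

lemma Pure_eq_discard:
  assumes P: "Pure C A B Z h p"
  shows "h = cmp C (mtens C (idm C B) (disc C Z)) p"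
proof -
  have h: "h \<in> hom C A B" using Pure_hom(1)[OF P] .
  then have "h \<in> hom C A (otens C B (unit_obj C))"
    and "h = cmp C (mtens C (idm C B) (disc C (unit_obj C))) h"
    using id_left[OF h] by (simp_all add: disc_unit tens_id)
  then obtain c where c: "causal C Z (unit_obj C) c" and hc: "h = cmp C (mtens C (idm C B) c) p"
    using Pure_universal[OF P] by blast
  have "c = disc C Z"
    using c id_left disc_unit unfolding causal_def by fastforce
  then show ?thesis using hc by simp
qed

lemma preceq_Pure_iff:
  assumes P: "Pure C A B Z h p"
  shows "preceq C A B f h \<longleftrightarrow> (\<exists>e\<in>hom C Z (unit_obj C). f = cmp C (mtens C (idm C B) e) p)"
proof
  assume "preceq C A B f h"
  then obtain X g0 f0 where g0: "g0 \<in> hom C A (otens C B X)" and f0: "f0 \<in> hom C X (unit_obj C)"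
    and f: "f = cmp C (mtens C (idm C B) f0) g0" and h: "h = cmp C (mtens C (idm C B) (disc C X)) g0"
    by (rule preceqE)
  obtain c where "c \<in> hom C Z X" and "g0 = cmp C (mtens C (idm C B) c) p"
    using Pure_universal[OF P g0 h] unfolding causal_def by blast
  then show "\<exists>e\<in>hom C Z (unit_obj C). f = cmp C (mtens C (idm C B) e) p"
    using f idm_tens_comp_assoc[OF _ f0 Pure_hom(2)[OF P]] comp_hom[OF _ f0] by blast
next
  assume "\<exists>e\<in>hom C Z (unit_obj C). f = cmp C (mtens C (idm C B) e) p"
  then obtain e where e: "e \<in> hom C Z (unit_obj C)" and f: "f = cmp C (mtens C (idm C B) e) p"
    by blast
  have "f \<in> hom C A B"
    using f comp_hom[OF Pure_hom(2)[OF P] idm_tens_hom[OF e]] by simp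
  then show "preceq C A B f h"
    using preceqI[OF _ Pure_hom(1,2)[OF P] e f Pure_eq_discard[OF P]] by blast
qed

text \<open>The second purifiability axiom with \<open>f\<^sub>1 = p\<close>, \<open>f\<^sub>2 = e\<close> and
  \<open>A\<^sub>2 = B\<^sub>2 = I\<close>.\<close>

lemma Pure_idm_tens_effect:
  assumes pp: "pseudo_purifiable C"
    and P1: "Pure C A (otens C B Z) X1 p p1" and P2: "Pure C Z (unit_obj C) X2 e p2"
  shows "Pure C A B (otens C X1 X2) (cmp C (mtens C (idm C B) e) p)
    (cmp C (mtens C (idm C B) (cmp C (symm C X2 X1) (mtens C p2 (idm C X1)))) p1)"
proof -
  let ?I = "unit_obj C"
  have p: "p \<in> hom C A (otens C B Z)" and p1: "p1 \<in> hom C A (otens C B (otens C Z X1))"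
    using Pure_hom[OF P1] by simp_all
  have e: "e \<in> hom C (otens C Z ?I) ?I" and p2: "p2 \<in> hom C Z X2"
    using Pure_hom[OF P2] by simp_all
  have p2X1: "mtens C p2 (idm C X1) \<in> hom C (otens C Z X1) (otens C X2 X1)"
    using tens_idm_hom[OF p2] by simp
  have P2': "Pure C (otens C Z ?I) ?I X2 e p2"
    using P2 by simp
  have symm: "mtens C (idm C (otens C B Z)) (symm C X1 ?I) = idm C (otens C (otens C B Z) X1)"
    by (simp add: symm_unit_right tens_id)
  have assoc: "mtens C (mtens C (idm C B) p2) (idm C X1) = mtens C (idm C B) (mtens C p2 (idm C X1))"
    using tens_assoc[OF hom_arr[OF id_hom] hom_arr[OF p2] hom_arr[OF id_hom]] .
  from pseudo_purifiable_Pure_comp[OF pp p e P1 P2'] show ?thesis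
    unfolding symm assoc
    using tens_unit_right_hom[OF p] tens_unit_right_hom[OF p1] id_left[OF p1]
      idm_tens_comp_assoc[OF p2X1 symm_hom p1] by simp
qed

lemma Pure_Pure_eq_discard:
  assumes P: "Pure C A B Z h p" and P1: "Pure C A (otens C B Z) X p p1"
  shows "h = cmp C (mtens C (idm C B) (disc C (otens C Z X))) p1"
proof -
  have p1: "p1 \<in> hom C A (otens C B (otens C Z X))"
    using Pure_hom(2)[OF P1] by simp
  have discZX: "disc C (otens C Z X) = cmp C (disc C Z) (mtens C (idm C Z) (disc C X))"
    using tens_eq_comp_tens_idm[OF disc_hom disc_hom] disc_tens tens_unit_right_hom[OF disc_hom]
    by simp
  have "h = cmp C (mtens C (idm C B) (disc C Z))
      (cmp C (mtens C (idm C B) (mtens C (idm C Z) (disc C X))) p1)"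
    using Pure_eq_discard[OF P] Pure_eq_discard[OF P1] idm_otens_tens[OF disc_hom] by simp
  also have "\<dots> = cmp C (mtens C (idm C B) (disc C (otens C Z X))) p1"
    using idm_tens_comp_assoc[OF idm_tens_hom[OF disc_hom] disc_hom] p1 discZX by simp
  finally show ?thesis .
qed

lemma preceq_refl:
  assumes f: "f \<in> hom C A B"
  shows "preceq C A B f f"
proof (rule preceqI[OF f f])
  show "f \<in> hom C A (otens C B (unit_obj C))" using f by simp
  show "f = cmp C (mtens C (idm C B) (idm C (unit_obj C))) f"
    and "f = cmp C (mtens C (idm C B) (disc C (unit_obj C))) f"
    using id_left[OF f] by (simp_all add: tens_id disc_unit)
qed (rule id_hom)

lemma preceq_trans:
  assumes pp: "pseudo_purifiable C" and fg: "preceq C A B f g" and gh: "preceq C A B g h"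
  shows "preceq C A B f h"
proof -
  obtain Z p where P: "Pure C A B Z h p"
    using pseudo_purifiable_Pure_ex[OF pp preceq_hom(2)[OF gh]] by blast
  obtain e where e: "e \<in> hom C Z (unit_obj C)" and g: "g = cmp C (mtens C (idm C B) e) p"
    using gh preceq_Pure_iff[OF P] by blast
  obtain X1 p1 where P1: "Pure C A (otens C B Z) X1 p p1"
    using pseudo_purifiable_Pure_ex[OF pp Pure_hom(2)[OF P]] by blast
  obtain X2 p2 where P2: "Pure C Z (unit_obj C) X2 e p2"
    using pseudo_purifiable_Pure_ex[OF pp e] by blast
  define r where "r = cmp C (symm C X2 X1) (mtens C p2 (idm C X1))"
  have r: "r \<in> hom C (otens C Z X1) (otens C X1 X2)"
    unfolding r_def using comp_hom[OF tens_idm_hom[OF Pure_hom(2)[OF P2]] symm_hom] by simp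
  have p1: "p1 \<in> hom C A (otens C B (otens C Z X1))"
    using Pure_hom(2)[OF P1] by simp
  obtain k where k: "k \<in> hom C (otens C X1 X2) (unit_obj C)"
    and "f = cmp C (mtens C (idm C B) k) (cmp C (mtens C (idm C B) r) p1)"
    using fg preceq_Pure_iff[OF Pure_idm_tens_effect[OF pp P1 P2, folded g r_def]] by blast
  then have "f = cmp C (mtens C (idm C B) (cmp C k r)) p1"
    using idm_tens_comp_assoc[OF r k p1] by simp
  then show ?thesis
    using preceqI[OF preceq_hom(1)[OF fg] preceq_hom(2)[OF gh] p1 comp_hom[OF r k]]
      Pure_Pure_eq_discard[OF P P1] by blast
qed

lemma comp_dilations:
  assumes F: "F \<in> hom C A (otens C B X)" and G: "G \<in> hom C B (otens C D Y)"
    and e1: "e1 \<in> hom C Y (unit_obj C)" and e2: "e2 \<in> hom C X (unit_obj C)"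
  shows "cmp C (mtens C (idm C D) (mtens C e1 e2)) (cmp C (mtens C G (idm C X)) F)
       = cmp C (cmp C (mtens C (idm C D) e1) G) (cmp C (mtens C (idm C B) e2) F)"
proof -
  define g where "g = cmp C (mtens C (idm C D) e1) G"
  have De1: "mtens C (idm C D) e1 \<in> hom C (otens C D Y) D"
    using idm_tens_hom[OF e1, of D] by simp
  have g: "g \<in> hom C B D"
    unfolding g_def using comp_hom[OF G De1] .
  have "cmp C (mtens C (idm C D) (mtens C e1 e2)) (mtens C G (idm C X))
      = mtens C g (cmp C e2 (idm C X))"
    using tens_interchange[OF G De1 id_hom e2]
      tens_assoc[OF hom_arr[OF id_hom] hom_arr[OF e1] hom_arr[OF e2]] unfolding g_def by simp
  also have "\<dots> = cmp C g (mtens C (idm C B) e2)"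
    using tens_eq_comp_tens_idm[OF g e2] id_right[OF e2] tens_unit_right_hom[OF g] by simp
  finally have "cmp C (mtens C (idm C D) (mtens C e1 e2)) (mtens C G (idm C X))
      = cmp C g (mtens C (idm C B) e2)" .
  moreover have "mtens C (idm C D) (mtens C e1 e2) \<in> hom C (otens C D (otens C Y X)) D"
    using idm_tens_hom[OF tens_hom[OF e1 e2], of D] by simp
  moreover have "mtens C (idm C B) e2 \<in> hom C (otens C B X) B"
    using idm_tens_hom[OF e2, of B] by simp
  ultimately show ?thesis
    unfolding g_def[symmetric]
    using comp_assoc[OF F tens_idm_hom[OF G]] comp_assoc[OF F _ g] by simp
qed

lemma preceq_comp:
  assumes ff: "preceq C A B f f'" and gg: "preceq C B D g g'"
  shows "preceq C A D (cmp C g f) (cmp C g' f')"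
proof -
  obtain X F f0 where F: "F \<in> hom C A (otens C B X)" and f0: "f0 \<in> hom C X (unit_obj C)"
    and f: "f = cmp C (mtens C (idm C B) f0) F" and f': "f' = cmp C (mtens C (idm C B) (disc C X)) F"
    using ff by (rule preceqE)
  obtain Y G g0 where G: "G \<in> hom C B (otens C D Y)" and g0: "g0 \<in> hom C Y (unit_obj C)"
    and g: "g = cmp C (mtens C (idm C D) g0) G" and g': "g' = cmp C (mtens C (idm C D) (disc C Y)) G"
    using gg by (rule preceqE)
  have "cmp C (mtens C G (idm C X)) F \<in> hom C A (otens C D (otens C Y X))"
    using comp_hom[OF F tens_idm_hom[OF G]] by simp
  moreover have "mtens C g0 f0 \<in> hom C (otens C Y X) (unit_obj C)"
    using tens_hom[OF g0 f0] by simp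
  moreover have "cmp C g f = cmp C (mtens C (idm C D) (mtens C g0 f0)) (cmp C (mtens C G (idm C X)) F)"
    using comp_dilations[OF F G g0 f0] f g by simp
  moreover have "cmp C g' f'
      = cmp C (mtens C (idm C D) (disc C (otens C Y X))) (cmp C (mtens C G (idm C X)) F)"
    using comp_dilations[OF F G disc_hom disc_hom] f' g' disc_tens by simp
  ultimately show ?thesis
    using preceqI[OF comp_hom comp_hom] preceq_hom[OF ff] preceq_hom[OF gg] by blast
qed

lemma tens_idm_dilation:
  assumes F: "F \<in> hom C A (otens C B X)" and e: "e \<in> hom C X (unit_obj C)"
  shows "mtens C (cmp C (mtens C (idm C B) e) F) (idm C A')
    = cmp C (mtens C (idm C (otens C B A')) e)
        (cmp C (mtens C (idm C B) (symm C X A')) (mtens C F (idm C A')))"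
proof -
  have A'e: "mtens C (idm C A') e \<in> hom C (otens C A' X) A'"
    using idm_tens_hom[OF e, of A'] by simp
  have FA': "mtens C F (idm C A') \<in> hom C (otens C A A') (otens C B (otens C X A'))"
    using tens_idm_hom[OF F] by simp
  have "cmp C (mtens C (idm C A') e) (symm C X A') = cmp C (symm C (unit_obj C) A') (mtens C e (idm C A'))"
    using symm_natural[OF e id_hom[of A']] by simp
  also have "\<dots> = mtens C e (idm C A')"
    using symm_unit_left id_left[OF tens_idm_hom[OF e]] by simp
  finally have swap: "cmp C (mtens C (idm C A') e) (symm C X A') = mtens C e (idm C A')" .
  have "mtens C (cmp C (mtens C (idm C B) e) F) (idm C A')
      = cmp C (mtens C (mtens C (idm C B) e) (idm C A')) (mtens C F (idm C A'))"
    using tens_interchange[OF F idm_tens_hom[OF e] id_hom id_hom] id_left[OF id_hom] by simp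
  also have "\<dots> = cmp C (mtens C (idm C B) (mtens C e (idm C A'))) (mtens C F (idm C A'))"
    using tens_assoc[OF hom_arr[OF id_hom] hom_arr[OF e] hom_arr[OF id_hom]] by simp
  also have "\<dots> = cmp C (mtens C (idm C (otens C B A')) e)
        (cmp C (mtens C (idm C B) (symm C X A')) (mtens C F (idm C A')))"
    using idm_tens_comp_assoc[OF symm_hom A'e FA'] idm_otens_tens[OF e] swap by simp
  finally show ?thesis .
qed

lemma preceq_tens_idm:
  assumes ff: "preceq C A B f f'"
  shows "preceq C (otens C A A') (otens C B A') (mtens C f (idm C A')) (mtens C f' (idm C A'))"
proof -
  obtain X F f0 where F: "F \<in> hom C A (otens C B X)" and f0: "f0 \<in> hom C X (unit_obj C)"
    and f: "f = cmp C (mtens C (idm C B) f0) F" and f': "f' = cmp C (mtens C (idm C B) (disc C X)) F"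
    using ff by (rule preceqE)
  have "mtens C F (idm C A') \<in> hom C (otens C A A') (otens C B (otens C X A'))"
    using tens_idm_hom[OF F] by simp
  then have "cmp C (mtens C (idm C B) (symm C X A')) (mtens C F (idm C A'))
      \<in> hom C (otens C A A') (otens C (otens C B A') X)"
    using comp_hom idm_tens_hom[OF symm_hom[of X A'], of B] by fastforce
  then show ?thesis
    using preceqI[OF tens_idm_hom tens_idm_hom _ f0] preceq_hom[OF ff]
      tens_idm_dilation[OF F f0, folded f] tens_idm_dilation[OF F disc_hom, folded f'] by blast
qed

lemma preceq_idm_tens:
  assumes gg: "preceq C A' B' g g'"
  shows "preceq C (otens C B A') (otens C B B') (mtens C (idm C B) g) (mtens C (idm C B) g')"
proof -
  obtain Y G g0 where G: "G \<in> hom C A' (otens C B' Y)" and g0: "g0 \<in> hom C Y (unit_obj C)"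
    and g: "g = cmp C (mtens C (idm C B') g0) G" and g': "g' = cmp C (mtens C (idm C B') (disc C Y)) G"
    using gg by (rule preceqE)
  have dilation: "mtens C (idm C B) (cmp C (mtens C (idm C B') e) G)
      = cmp C (mtens C (idm C (otens C B B')) e) (mtens C (idm C B) G)"
    if e: "e \<in> hom C Y (unit_obj C)" for e
    using idm_tens_comp[OF G idm_tens_hom[OF e]] idm_otens_tens[OF e] by simp
  have "mtens C (idm C B) G \<in> hom C (otens C B A') (otens C (otens C B B') Y)"
    using idm_tens_hom[OF G] by simp
  then show ?thesis
    using preceqI[OF idm_tens_hom idm_tens_hom _ g0] preceq_hom[OF gg]
      dilation[OF g0, folded g] dilation[OF disc_hom, folded g'] by blast
qed

lemma preceq_tens:
  assumes ff: "preceq C A B f f'" and gg: "preceq C A' B' g g'"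
  shows "preceq C (otens C A A') (otens C B B') (mtens C f g) (mtens C f' g')"
  using preceq_comp[OF preceq_tens_idm[OF ff] preceq_idm_tens[OF gg]]
  unfolding tens_eq_comp_idm_tens[OF preceq_hom(1)[OF ff] preceq_hom(1)[OF gg]]
    tens_eq_comp_idm_tens[OF preceq_hom(2)[OF ff] preceq_hom(2)[OF gg]] .

end

theorem lemma5:
  fixes C :: "('o, 'm) smcat"
  assumes "discard_category C" and "pseudo_purifiable C"
  shows "(\<forall>A B f. f \<in> hom C A B \<longrightarrow> preceq C A B f f)
    \<and> (\<forall>A B f g h. preceq C A B f g \<and> preceq C A B g h \<longrightarrow> preceq C A B f h)
    \<and> (\<forall>A B D f f' g g'. preceq C A B f f' \<and> preceq C B D g g'
          \<longrightarrow> preceq C A D (cmp C g f) (cmp C g' f'))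
    \<and> (\<forall>A B A' B' f f' g g'. preceq C A B f f' \<and> preceq C A' B' g g'
          \<longrightarrow> preceq C (otens C A A') (otens C B B') (mtens C f g) (mtens C f' g'))"
proof -
  interpret discard_category C by (rule assms(1))
  show ?thesis
    by (intro conjI allI impI; (elim conjE)?)
      (blast intro: preceq_refl preceq_trans[OF assms(2)] preceq_comp preceq_tens)+
qed

end
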